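(* Let $p\geq3$ be prime and $n\geq 2$. (1) If $1\leq i<p-1$, then $\Lambda_{i,n}^{p^{n-1}}-1=\sum_{l=1}^{i}\frac{(-1)^l}{[l!]}\zeta_{2(p-1)}^l p^{\frac{l}{p-1}}+O\left(p^{1+\frac{1}{p(p-1)}}\right)$. (2) If $i\geq p-1$, then $\Lambda_{i,n}^{p^{n-1}}-1=\sum_{l=1}^{p-1} \frac{(-1)^l}{[l!]}\zeta_{2(p-1)}^l p^{\frac{l}{p-1}}+\zeta_{2(p-1)}\, p^{1+\frac{1}{p-1}-\frac{1}{p^{i-p+2}}}+O\left(p^{1+\frac{1}{p-1}}\right)$.
   Context: $\mathbb{L}_p$ is the $p$-adic Mal'cev–Neumann field of formal sums $\sum_{x\in\mathbb{Q}}[\alpha_x]p^x$ ($\alpha_x\in\bar{\mathbb{F}}_p$, $[\cdot]$ Teichmüller lift, well-ordered support), valuation $v_p$ = minimum of support, $p^x$ the element with support $\{x\}$ and coefficient $1$; $\alpha=\beta+O(p^x)$ means $v_p(\alpha-\beta)\geq x$. $\zeta_{2(p-1)}$ is (the Teichmüller lift of) a fixed primitive $2(p-1)$-th root of unity in $\bar{\mathbb{F}}_p$; $[k!]$ is the Teichmüller lift of $k!\bmod p$. For $n\ge2$ define $\Lambda_{i,n}=\sum_{k=0}^i \frac{(-1)^{kn}}{[k!]}\zeta_{2(p-1)}^k p^{\frac{k}{p^{n-1}(p-1)}}$ for $0\leq i\leq p-1$, and $\Lambda_{i,n}=\Lambda_{p-1,n}+ \sum_{l=n}^{i-p+n}(-1)^n\zeta_{2(p-1)}\,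 p^{\frac{1}{p^{n-2}(p-1)}-\frac{1}{p^l}}$ for $i\geq p$. *)

theory Defs
  imports "Berlekamp_Zassenhaus.Finite_Field" "HOL-Algebra.Algebraic_Closure_Type"
begin

text \<open>The residue field: an algebraic closure of F_p, where p = CARD('p).\<close>
type_synonym 'p Fpbar = "'p mod_ring alg_closure"

text \<open>Structure of the p-adic Mal'cev-Neumann field L_p used in the statement:
  a field 'L with the valuation v (on nonzero elements, values in Q),
  the Teichmueller lift T from the residue field, and the elements pw x = p^x.\<close>
definition Lp_structure ::
  "nat \<Rightarrow> ('k::field \<Rightarrow> 'L::field) \<Rightarrow> ('L \<Rightarrow> rat) \<Rightarrow> (rat \<Rightarrow> 'L) \<Rightarrow> bool" where
  "Lp_structure p T v pw \<longleftrightarrow>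
     (\<forall>x y. x \<noteq> 0 \<longrightarrow> y \<noteq> 0 \<longrightarrow> v (x * y) = v x + v y) \<and>
     (\<forall>x y. x \<noteq> 0 \<longrightarrow> y \<noteq> 0 \<longrightarrow> x + y \<noteq> 0 \<longrightarrow> min (v x) (v y) \<le> v (x + y)) \<and>
     (\<forall>x y. pw (x + y) = pw x * pw y) \<and> pw 1 = of_nat p \<and>
     (\<forall>x. pw x \<noteq> 0 \<and> v (pw x) = x) \<and>
     T 0 = 0 \<and> T 1 = 1 \<and> (\<forall>a b. T (a * b) = T a * T b) \<and>
     (\<forall>a. a \<noteq> 0 \<longrightarrow> v (T a) = 0) \<and>
     (\<forall>a b. T a + T b \<noteq> T (a + b) \<longrightarrow> 0 < v (T a + T b - T (a + b)))"

text \<open>alpha = beta + O(p^r), i.e. v_p(alpha - beta) >= r (with v_p(0) = infinity).\<close>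
definition bigO_eq :: "('L::field \<Rightarrow> rat) \<Rightarrow> 'L \<Rightarrow> 'L \<Rightarrow> rat \<Rightarrow> bool" where
  "bigO_eq v a b r \<longleftrightarrow> a = b \<or> r \<le> v (a - b)"

text \<open>Lambda_{i,n}; z is the Teichmueller lift of the chosen primitive 2(p-1)-th root of unity.\<close>
definition Lambda ::
  "nat \<Rightarrow> ('k::field \<Rightarrow> 'L::field) \<Rightarrow> (rat \<Rightarrow> 'L) \<Rightarrow> 'k \<Rightarrow> nat \<Rightarrow> nat \<Rightarrow> 'L" where
  "Lambda p T pw \<zeta> i n =
     (\<Sum>k = 0..min i (p - 1). (-1) ^ (k * n) / T (of_nat (fact k)) * T \<zeta> ^ k
         * pw (of_nat k / (of_nat p ^ (n - 1) * (of_nat p - 1))))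
     + (if p \<le> i then
          (\<Sum>l = n..i - p + n. (-1) ^ n * T \<zeta>
             * pw (1 / (of_nat p ^ (n - 2) * (of_nat p - 1)) - 1 / of_nat p ^ l))
        else 0)"

end

theory Submission
  imports Defs
begin

text \<open>
  Put M = p^(n-2) and y = [zeta] p^(1/(p(p-1))). On integral elements the M-th power is additive
  modulo p, and it sends the k-th term of Lambda_{i,n} to y^k/[k!] and the tail terms to
  [zeta] p^(1/(p-1) - 1/p^j). So Lambda^M is congruent modulo p to a truncated exponential E in y
  plus a tail W, and Lambda^(p^(n-1)) is congruent to (E + W)^p modulo p^2.

  The heart of the matter is the congruence E^p = 1 + p y + sum_{0<k<p} y^(kp)/[k!] modulo
  p^(1+1/(p-1)) for the full truncated exponential. Multiplied by (p-1)!^p it becomes a statement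
  about the integer polynomial G = sum_{k<p} (p-1)!/k! X^k: from G' = G - X^(p-1) the coefficients
  of G^p below degree p are p^d (p-1)!^p/d!, hence divisible by p^2 for d >= 2, and above degree p
  Frobenius gives G^p = sum_k ((p-1)!/k!)^p X^(kp) modulo p. When i >= p - 1 the binomial cross
  term p W, the p-th powers of the tail terms and p y telescope to the single term
  [zeta] p^(1+1/(p-1)-1/p^(i-p+2)).
\<close>

section \<open>An integer polynomial attached to the truncated exponential\<close>

lemma binomial_ring_inner:
  fixes a b :: "'a::comm_semiring_1"
  assumes "p > 0"
  shows "(a + b) ^ p = a ^ p + b ^ p + (\<Sum>j\<in>{1..<p}. of_nat (p choose j) * a ^ j * b ^ (p - j))"
proof -
  have "{..p} = insert 0 (insert p {1..<p})" using assms by auto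
  then show ?thesis using assms by (simp add: binomial_ring[of a b p] algebra_simps)
qed

lemma freshmans_dream_mod_prime:
  fixes a b :: "'a::comm_ring_1"
  assumes "Factorial_Ring.prime p"
  obtains c where "(a + b) ^ p = a ^ p + b ^ p + of_nat p * c"
proof
  have "p dvd (p choose j)" if "j \<in> {1..<p}" for j
    using that assms by (intro dvd_choose_prime) auto
  then have "(\<Sum>j\<in>{1..<p}. of_nat (p choose j) * a ^ j * b ^ (p - j))
      = of_nat p * (\<Sum>j\<in>{1..<p}. of_nat ((p choose j) div p) * a ^ j * b ^ (p - j))"
    by (auto simp: sum_distrib_left mult.assoc[symmetric] of_nat_mult[symmetric] intro!: sum.cong)
  then show "(a + b) ^ p = a ^ p + b ^ p
      + of_nat p * (\<Sum>j\<in>{1..<p}. of_nat ((p choose j) div p) * a ^ j * b ^ (p - j))"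
    using binomial_ring_inner[of p a b] prime_gt_0_nat[OF assms] by simp
qed

lemma freshmans_dream_sum_mod_prime:
  fixes f :: "'b \<Rightarrow> 'a::comm_ring_1"
  assumes "Factorial_Ring.prime p" "finite A"
  obtains c where "(\<Sum>x\<in>A. f x) ^ p = (\<Sum>x\<in>A. f x ^ p) + of_nat p * c"
proof -
  have "\<exists>c. (\<Sum>x\<in>A. f x) ^ p = (\<Sum>x\<in>A. f x ^ p) + of_nat p * c"
    using assms(2)
  proof (induction A rule: finite_induct)
    case empty
    show ?case using prime_gt_0_nat[OF assms(1)] by (intro exI[of _ 0]) (simp add: power_0_left)
  next
    case (insert x A)
    then obtain c where c: "(\<Sum>x\<in>A. f x) ^ p = (\<Sum>x\<in>A. f x ^ p) + of_nat p * c" by blast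
    obtain d where "(f x + (\<Sum>x\<in>A. f x)) ^ p = f x ^ p + (\<Sum>x\<in>A. f x) ^ p + of_nat p * d"
      using freshmans_dream_mod_prime[OF assms(1)] .
    then show ?case using insert c by (intro exI[of _ "c + d"]) (simp add: algebra_simps)
  qed
  then show thesis using that by blast
qed

definition scaled_exp_coeff :: "nat \<Rightarrow> nat \<Rightarrow> int" where
  "scaled_exp_coeff p k = int (fact (p - 1) div fact k)"

definition scaled_exp_poly :: "nat \<Rightarrow> int poly" where
  "scaled_exp_poly p = (\<Sum>k<p. monom (scaled_exp_coeff p k) k)"

lemma of_int_fact_eq_of_nat: "(of_int (fact n) :: 'a::comm_ring_1) = of_nat (fact n)"
  by (metis of_int_of_nat_eq of_nat_fact)

lemma scaled_exp_coeff_mult_fact: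
  assumes "k < p"
  shows "of_int (scaled_exp_coeff p k) * of_nat (fact k) = (of_nat (fact (p - 1)) :: 'a::comm_ring_1)"
proof -
  have "fact k dvd (fact (p - 1) :: nat)"
    using assms by (intro fact_dvd) simp
  then show ?thesis
    unfolding scaled_exp_coeff_def of_int_of_nat_eq of_nat_mult[symmetric] by simp
qed

lemma poly_of_int_scaled_exp_poly:
  fixes y :: "'a::comm_ring_1"
  shows "poly (of_int_poly (scaled_exp_poly p)) y = (\<Sum>k<p. of_int (scaled_exp_coeff p k) * y ^ k)"
  by (simp add: scaled_exp_poly_def of_int_poly_hom.hom_sum of_int_hom.map_poly_hom_monom
      poly_sum poly_monom)

lemma pderiv_scaled_exp_poly:
  assumes "p > 0"
  shows "pderiv (scaled_exp_poly p) = scaled_exp_poly p - monom 1 (p - 1)"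
proof -
  obtain q where q: "p = Suc q" using assms by (cases p) auto
  have step: "of_nat (Suc j) * scaled_exp_coeff p (Suc j) = scaled_exp_coeff p j" if "j < q" for j
  proof -
    have "of_nat (Suc j) * scaled_exp_coeff p (Suc j) * fact j = scaled_exp_coeff p (Suc j) * fact (Suc j)"
      by (simp add: algebra_simps)
    also have "\<dots> = scaled_exp_coeff p j * fact j"
      using scaled_exp_coeff_mult_fact[of "Suc j" p, where 'a=int]
        scaled_exp_coeff_mult_fact[of j p, where 'a=int] that q
      by (simp add: algebra_simps)
    finally show ?thesis by simp
  qed
  have "pderiv (scaled_exp_poly p) = (\<Sum>k<p. monom (of_nat k * scaled_exp_coeff p k) (k - 1))"
    unfolding scaled_exp_poly_def by (simp add: pderiv_sum pderiv_monom)
  also have "\<dots> = (\<Sum>j<q. monom (of_nat (Suc j) * scaled_exp_coeff p (Suc j)) j)"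
    unfolding q sum.lessThan_Suc_shift by simp
  also have "\<dots> = (\<Sum>j<q. monom (scaled_exp_coeff p j) j)"
    using step by (intro sum.cong) auto
  also have "\<dots> = scaled_exp_poly p - monom 1 (p - 1)"
    unfolding scaled_exp_poly_def q by (simp add: scaled_exp_coeff_def)
  finally show ?thesis .
qed

lemma coeff_scaled_exp_poly_power_0:
  "p > 0 \<Longrightarrow> coeff (scaled_exp_poly p ^ m) 0 = fact (p - 1) ^ m"
  by (simp add: coeff_0_power scaled_exp_poly_def coeff_sum scaled_exp_coeff_def)

text \<open>Because G' = G - X^(p-1), below degree p - 1 the power G^m satisfies the differential
  equation (G^m)' = m G^m of exp(m X).\<close>

lemma coeff_scaled_exp_poly_power_Suc:
  assumes "Suc d < p"
  shows "of_nat (Suc d) * coeff (scaled_exp_poly p ^ m) (Suc d) = of_nat m * coeff (scaled_exp_poly p ^ m) d"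
proof -
  let ?G = "scaled_exp_poly p"
  have "pderiv (?G ^ m) = smult (of_nat m) (?G ^ m) - smult (of_nat m) (monom 1 (p - 1) * ?G ^ (m - 1))"
  proof (cases m)
    case (Suc k)
    have "pderiv (?G ^ Suc k) = smult (of_nat (Suc k)) (?G ^ k * (?G - monom 1 (p - 1)))"
      using assms by (subst pderiv_power) (simp add: pderiv_scaled_exp_poly)
    then show ?thesis using Suc by (simp add: algebra_simps smult_diff_right)
  qed simp
  then have "coeff (pderiv (?G ^ m)) d = of_nat m * coeff (?G ^ m) d"
    using assms by (simp add: coeff_monom_mult)
  then show ?thesis by (simp add: coeff_pderiv)
qed

lemma coeff_scaled_exp_poly_power_low:
  assumes "d < p"
  shows "fact d * coeff (scaled_exp_poly p ^ m) d = int m ^ d * fact (p - 1) ^ m"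
  using assms
proof (induction d)
  case 0
  then show ?case by (simp add: coeff_scaled_exp_poly_power_0)
next
  case (Suc d)
  have "fact (Suc d) * coeff (scaled_exp_poly p ^ m) (Suc d)
      = fact d * (of_nat (Suc d) * coeff (scaled_exp_poly p ^ m) (Suc d))"
    by (simp add: algebra_simps)
  also have "\<dots> = int m * (fact d * coeff (scaled_exp_poly p ^ m) d)"
    using coeff_scaled_exp_poly_power_Suc[OF Suc.prems] by simp
  also have "\<dots> = int m ^ Suc d * fact (p - 1) ^ m"
    using Suc by simp
  finally show ?case .
qed

lemma coeff_scaled_exp_poly_pow_prime_mid:
  assumes "Factorial_Ring.prime p" "2 \<le> d" "d < p"
  shows "int p ^ 2 dvd coeff (scaled_exp_poly p ^ p) d"
proof -
  have "int p ^ 2 dvd fact d * coeff (scaled_exp_poly p ^ p) d"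
    using coeff_scaled_exp_poly_power_low[OF assms(3)] assms(2) by (simp add: le_imp_power_dvd)
  moreover have "\<not> int p dvd fact d"
    using assms prime_dvd_fact_iff[of p d] by (metis of_nat_dvd_iff of_nat_fact not_le)
  then have "coprime (int p ^ 2) (fact d)"
    using assms(1) by (simp add: prime_imp_coprime)
  ultimately show ?thesis
    using coprime_dvd_mult_right_iff by blast
qed

lemma coeff_sum_monom_mult_below:
  assumes "d < p"
  shows "coeff (\<Sum>k<p. monom (c k) (k * p)) d = (if d = 0 then c 0 else 0)"
proof -
  have "(\<Sum>k<p. (if k * p = d then c k else 0)) = (\<Sum>k<p. (if k = 0 \<and> d = 0 then c k else 0))"
    using assms by (intro sum.cong refl) (auto simp: mult_eq_0_iff)
  moreover have "{..<p} \<inter> {0} = {0}"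
    using assms by auto
  ultimately show ?thesis
    by (simp add: coeff_sum coeff_monom sum.If_cases)
qed

lemma scaled_exp_poly_pow_prime_cong:
  assumes "Factorial_Ring.prime p"
  defines "R \<equiv> scaled_exp_poly p ^ p - monom (int p * fact (p - 1) ^ p) 1
    - (\<Sum>k<p. monom (scaled_exp_coeff p k ^ p) (k * p))"
  shows "d < p \<Longrightarrow> int p ^ 2 dvd coeff R d"
    and "int p dvd coeff R d"
proof -
  have p0: "p > 0" using prime_gt_0_nat[OF assms(1)] .
  have frob_coeff: "coeff (\<Sum>k<p. monom (scaled_exp_coeff p k ^ p) (k * p)) d
      = (if d = 0 then fact (p - 1) ^ p else 0)" if "d < p" for d
    using coeff_sum_monom_mult_below[OF that, of "\<lambda>k. scaled_exp_coeff p k ^ p"]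
    by (simp add: scaled_exp_coeff_def)
  show "int p ^ 2 dvd coeff R d" if "d < p"
  proof -
    consider "d = 0" | "d = 1" | "2 \<le> d" by linarith
    then show ?thesis
    proof cases
      case 1
      then show ?thesis using p0 that
        by (simp add: R_def frob_coeff coeff_scaled_exp_poly_power_0)
    next
      case 2
      then show ?thesis using coeff_scaled_exp_poly_power_low[of 1 p p] that
        by (simp add: R_def frob_coeff)
    next
      case 3
      then show ?thesis using coeff_scaled_exp_poly_pow_prime_mid[OF assms(1) 3 that]
        by (simp add: R_def frob_coeff that)
    qed
  qed
  obtain H where "scaled_exp_poly p ^ p = (\<Sum>k<p. monom (scaled_exp_coeff p k) k ^ p) + of_nat p * H"
    using freshmans_dream_sum_mod_prime[OF assms(1), of "{..<p}"] unfolding scaled_exp_poly_def by auto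
  then have "R = of_nat p * (H - monom (fact (p - 1) ^ p) 1)"
    by (simp add: R_def monom_power algebra_simps smult_monom of_nat_poly flip: smult_monom)
  then show "int p dvd coeff R d"
    by (simp add: of_nat_poly)
qed

section \<open>Valued fields\<close>

locale valued_field =
  fixes v :: "'a::field \<Rightarrow> rat"
  assumes v_mult: "x \<noteq> 0 \<Longrightarrow> y \<noteq> 0 \<Longrightarrow> v (x * y) = v x + v y"
    and v_add: "x \<noteq> 0 \<Longrightarrow> y \<noteq> 0 \<Longrightarrow> x + y \<noteq> 0 \<Longrightarrow> min (v x) (v y) \<le> v (x + y)"
begin

lemma v_one [simp]: "v 1 = 0"
  using v_mult[of 1 1] by simp

lemma v_uminus: "x \<noteq> 0 \<Longrightarrow> v (- x) = v x"
proof -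
  have "v (-1) = 0" using v_mult[of "-1" "-1"] by simp
  then show "x \<noteq> 0 \<Longrightarrow> v (- x) = v x" using v_mult[of "-1" x] by simp
qed

lemma v_inverse: "x \<noteq> 0 \<Longrightarrow> v (inverse x) = - v x"
  using v_mult[of x "inverse x"] by simp

lemma v_power: "x \<noteq> 0 \<Longrightarrow> v (x ^ k) = of_nat k * v x"
  by (induction k) (simp_all add: v_mult algebra_simps)

text \<open>The valuation is only constrained on nonzero elements; val_ge and val_gt treat v 0 as
  infinity.\<close>

definition val_ge :: "rat \<Rightarrow> 'a \<Rightarrow> bool" where
  "val_ge r x \<longleftrightarrow> x = 0 \<or> r \<le> v x"

definition val_gt :: "rat \<Rightarrow> 'a \<Rightarrow> bool" where
  "val_gt r x \<longleftrightarrow> x = 0 \<or> r < v x"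

lemma val_ge_zero [simp]: "val_ge r 0"
  by (simp add: val_ge_def)

lemma val_ge_one: "val_ge 0 1"
  by (simp add: val_ge_def)

lemma val_ge_mono: "r \<le> s \<Longrightarrow> val_ge s x \<Longrightarrow> val_ge r x"
  unfolding val_ge_def by auto

lemma val_ge_add: "val_ge r x \<Longrightarrow> val_ge r y \<Longrightarrow> val_ge r (x + y)"
  unfolding val_ge_def using v_add[of x y]
  by (cases "x = 0"; cases "y = 0"; cases "x + y = 0") auto

lemma val_ge_uminus: "val_ge r x \<Longrightarrow> val_ge r (- x)"
  unfolding val_ge_def by (cases "x = 0") (auto simp: v_uminus)

lemma val_ge_mult: "val_ge r x \<Longrightarrow> val_ge s y \<Longrightarrow> val_ge (r + s) (x * y)"
  unfolding val_ge_def by (cases "x = 0"; cases "y = 0") (auto simp: v_mult)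

lemma val_ge_sum: "(\<And>k. k \<in> S \<Longrightarrow> val_ge r (f k)) \<Longrightarrow> val_ge r (\<Sum>k\<in>S. f k)"
  by (induction S rule: infinite_finite_induct) (auto intro: val_ge_add)

lemma val_ge_power: "val_ge r x \<Longrightarrow> val_ge (of_nat k * r) (x ^ k)"
proof (induction k)
  case 0
  then show ?case using val_ge_one by simp
next
  case (Suc k)
  then have "val_ge (r + of_nat k * r) (x * x ^ k)" by (intro val_ge_mult)
  then show ?case by (simp add: algebra_simps)
qed

lemma val_ge_power_nonneg: "val_ge 0 x \<Longrightarrow> val_ge 0 (x ^ k)"
  using val_ge_power[of 0 x k] by simp

lemma val_ge_power_mono:
  assumes "val_ge r x" "0 \<le> r" "m \<le> k"
  shows "val_ge (of_nat m * r) (x ^ k)"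
  using assms by (intro val_ge_mono[OF _ val_ge_power[OF assms(1)]] mult_right_mono) auto

lemma val_ge_of_nat: "val_ge 0 (of_nat k)"
  by (induction k) (simp_all add: val_ge_add val_ge_one add.commute)

lemma val_ge_of_int: "val_ge 0 (of_int k)"
proof (cases "k \<ge> 0")
  case True
  then have "(of_int k :: 'a) = of_nat (nat k)" by simp
  then show ?thesis using val_ge_of_nat by simp
next
  case False
  then have "(of_int k :: 'a) = - of_nat (nat (- k))" by simp
  then show ?thesis using val_ge_uminus[OF val_ge_of_nat] by simp
qed

lemma val_ge_inverse_unit: "x \<noteq> 0 \<Longrightarrow> v x = 0 \<Longrightarrow> val_ge 0 (inverse x)"
  by (simp add: val_ge_def v_inverse)

lemma val_ge_pow_diff:
  assumes "val_ge 0 a" "val_ge 0 b" "val_ge r (a - b)"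
  shows "val_ge r (a ^ k - b ^ k)"
proof -
  have "val_ge 0 (\<Sum>i<k. b ^ (k - Suc i) * a ^ i)"
    using assms val_ge_mult[of 0 _ 0] val_ge_power_nonneg by (intro val_ge_sum) simp
  then show ?thesis
    using val_ge_mult[OF assms(3)] power_diff_sumr2[of a k b] by fastforce
qed

lemma val_ge_poly:
  assumes "\<And>d. val_ge r (of_int (coeff f d) * y ^ d)"
  shows "val_ge r (poly (of_int_poly f) y)"
  unfolding poly_altdef using assms by (auto intro!: val_ge_sum)

lemma bigO_eq_if_val_ge: "val_ge r (a - b) \<Longrightarrow> bigO_eq v a b r"
  unfolding bigO_eq_def val_ge_def by auto

lemma val_gt_add: "val_gt r x \<Longrightarrow> val_gt r y \<Longrightarrow> val_gt r (x + y)"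
  unfolding val_gt_def using v_add[of x y]
  by (cases "x = 0"; cases "y = 0"; cases "x + y = 0") auto

lemma val_gt_uminus: "val_gt r x \<Longrightarrow> val_gt r (- x)"
  unfolding val_gt_def by (cases "x = 0") (auto simp: v_uminus)

lemma val_gt_diff: "val_gt r x \<Longrightarrow> val_gt r y \<Longrightarrow> val_gt r (x - y)"
  using val_gt_add[of r x "- y"] val_gt_uminus[of r y] by simp

lemma v_add_eq_if_val_gt:
  assumes "a \<noteq> 0" "val_gt (v a) b"
  shows "a + b \<noteq> 0 \<and> v (a + b) = v a"
proof (cases "b = 0")
  case False
  then have vb: "v a < v b" using assms(2) by (simp add: val_gt_def)
  have nz: "a + b \<noteq> 0"
    using vb v_uminus[OF assms(1)] by (metis add_eq_0_iff less_irrefl)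
  have "v a \<le> v (a + b)" using v_add[OF assms(1) False nz] vb by simp
  moreover have "min (v (a + b)) (v (- b)) \<le> v a"
    using v_add[OF nz, of "- b"] False assms(1) by simp
  ultimately show ?thesis using nz vb v_uminus[OF False] by linarith
qed (use assms in simp)

end

locale p_valued_field = valued_field v
  for v :: "'a::field \<Rightarrow> rat" +
  fixes p :: nat
  assumes prime_p: "Factorial_Ring.prime p"
    and of_nat_p_nonzero: "(of_nat p :: 'a) \<noteq> 0"
    and v_of_nat_p: "v (of_nat p) = 1"
begin

lemma p_pos: "p > 0"
  using prime_gt_0_nat[OF prime_p] .

lemma val_ge_p_mult: "val_ge r x \<Longrightarrow> val_ge (r + 1) (of_nat p * x)"
  using val_ge_mult[of 1 "of_nat p" r x] of_nat_p_nonzero v_of_nat_p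
  by (simp add: val_ge_def add.commute)

lemma val_ge_of_int_dvd:
  assumes "int p ^ e dvd k"
  shows "val_ge (of_nat e) (of_int k)"
proof -
  obtain j where "k = int p ^ e * j" using assms by blast
  then have "of_int k = (of_nat p :: 'a) ^ e * of_int j" by simp
  moreover have "val_ge (of_nat e * 1) ((of_nat p :: 'a) ^ e)"
    using of_nat_p_nonzero v_of_nat_p by (intro val_ge_power) (simp add: val_ge_def)
  ultimately show ?thesis using val_ge_mult[OF _ val_ge_of_int] by fastforce
qed

lemma val_ge_prime_choose: "j \<in> {1..<p} \<Longrightarrow> val_ge 1 (of_nat (p choose j))"
  using val_ge_of_int_dvd[of 1 "int (p choose j)"] dvd_choose_prime[of j p] prime_p
  by (simp flip: of_nat_dvd_iff)

lemma val_ge_add_pow_prime: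
  assumes "val_ge a x" "val_ge b w" "0 \<le> a" "0 \<le> b"
  shows "val_ge (1 + b + a) ((w + x) ^ p - w ^ p - x ^ p)"
proof -
  have "val_ge (1 + b + a) (of_nat (p choose j) * w ^ j * x ^ (p - j))" if j: "j \<in> {1..<p}" for j
  proof -
    have "val_ge (of_nat 1 * b) (w ^ j)" using j by (intro val_ge_power_mono[OF assms(2,4)]) simp
    moreover have "val_ge (of_nat 1 * a) (x ^ (p - j))" using j by (intro val_ge_power_mono[OF assms(1,3)]) auto
    ultimately show ?thesis using val_ge_prime_choose[OF j] by (simp add: val_ge_mult)
  qed
  then have "val_ge (1 + b + a) (\<Sum>j\<in>{1..<p}. of_nat (p choose j) * w ^ j * x ^ (p - j))"
    by (intro val_ge_sum)
  then show ?thesis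
    using binomial_ring_inner[OF p_pos, of w x] by simp
qed

lemma val_ge_add_pow_prime_linear:
  assumes "val_ge 0 x" "val_ge b w" "0 \<le> b"
  shows "val_ge (1 + 2 * b) ((w + x) ^ p - w ^ p - x ^ p - of_nat p * w * x ^ (p - 1))"
proof -
  have split: "{1..<p} = insert 1 {2..<p}"
    using prime_ge_2_nat[OF prime_p] by auto
  have "val_ge (1 + 2 * b) (of_nat (p choose j) * w ^ j * x ^ (p - j))" if j: "j \<in> {2..<p}" for j
  proof -
    have "val_ge (of_nat 2 * b) (w ^ j)" using j by (intro val_ge_power_mono[OF assms(2,3)]) simp
    then have "val_ge (1 + 2 * b + 0) (of_nat (p choose j) * w ^ j * x ^ (p - j))"
      using val_ge_prime_choose j val_ge_power_nonneg[OF assms(1)] by (intro val_ge_mult) auto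
    then show ?thesis by simp
  qed
  then have "val_ge (1 + 2 * b) (\<Sum>j\<in>{2..<p}. of_nat (p choose j) * w ^ j * x ^ (p - j))"
    by (intro val_ge_sum)
  then show ?thesis
    using binomial_ring_inner[OF p_pos, of w x] unfolding split by simp
qed

lemma val_ge_pow_prime_diff:
  assumes "val_ge r (a - b)" "val_ge 0 b" "0 \<le> r"
  shows "val_ge (min (1 + r) (of_nat p * r)) (a ^ p - b ^ p)"
proof -
  have "val_ge (1 + r + 0) ((a - b + b) ^ p - (a - b) ^ p - b ^ p)"
    using val_ge_add_pow_prime[OF assms(2,1)] assms by simp
  moreover have "val_ge (of_nat p * r) ((a - b) ^ p)"
    using val_ge_power[OF assms(1)] .
  ultimately have "val_ge (min (1 + r) (of_nat p * r))
      (((a - b + b) ^ p - (a - b) ^ p - b ^ p) + (a - b) ^ p)"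
    by (intro val_ge_add) (auto elim: val_ge_mono[rotated])
  then show ?thesis by simp
qed

lemma val_ge_sum_pow_prime:
  assumes "finite S" "\<And>k. k \<in> S \<Longrightarrow> val_ge b (f k)" "0 \<le> b"
  shows "val_ge (1 + 2 * b) ((\<Sum>k\<in>S. f k) ^ p - (\<Sum>k\<in>S. f k ^ p))"
  using assms
proof (induction S rule: finite_induct)
  case empty
  then show ?case using p_pos by (simp add: power_0_left)
next
  case (insert k S)
  have "val_ge b (\<Sum>k\<in>S. f k)" using insert by (intro val_ge_sum) auto
  then have "val_ge (1 + b + b) ((f k + (\<Sum>k\<in>S. f k)) ^ p - f k ^ p - (\<Sum>k\<in>S. f k) ^ p)"
    using val_ge_add_pow_prime[of b "\<Sum>k\<in>S. f k" b "f k"] insert.prems by simp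
  then have "val_ge (1 + 2 * b) (((f k + (\<Sum>k\<in>S. f k)) ^ p - f k ^ p - (\<Sum>k\<in>S. f k) ^ p)
      + ((\<Sum>k\<in>S. f k) ^ p - (\<Sum>k\<in>S. f k ^ p)))"
    using insert by (intro val_ge_add) (auto simp: algebra_simps)
  then show ?case using insert by (simp add: algebra_simps)
qed

lemma val_ge_sum_pow_prime_power:
  assumes "finite S" "\<And>k. k \<in> S \<Longrightarrow> val_ge 0 (f k)"
  shows "val_ge 1 ((\<Sum>k\<in>S. f k) ^ (p ^ j) - (\<Sum>k\<in>S. f k ^ (p ^ j)))"
proof (induction j)
  case 0
  then show ?case by simp
next
  case (Suc j)
  define B where "B = (\<Sum>k\<in>S. f k ^ (p ^ j))"
  have "val_ge 0 B" unfolding B_def using assms val_ge_power_nonneg by (intro val_ge_sum) auto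
  then have "val_ge (min (1 + 1) (of_nat p * 1)) (((\<Sum>k\<in>S. f k) ^ (p ^ j)) ^ p - B ^ p)"
    using Suc by (intro val_ge_pow_prime_diff) (simp_all add: B_def)
  then have "val_ge 1 (((\<Sum>k\<in>S. f k) ^ (p ^ j)) ^ p - B ^ p)"
    using prime_ge_2_nat[OF prime_p] by (elim val_ge_mono[rotated]) simp
  moreover have "val_ge (1 + 2 * 0) (B ^ p - (\<Sum>k\<in>S. (f k ^ (p ^ j)) ^ p))"
    unfolding B_def using assms val_ge_power_nonneg by (intro val_ge_sum_pow_prime) auto
  ultimately have "val_ge 1 ((((\<Sum>k\<in>S. f k) ^ (p ^ j)) ^ p - B ^ p) + (B ^ p - (\<Sum>k\<in>S. (f k ^ (p ^ j)) ^ p)))"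
    by (intro val_ge_add) auto
  then show ?case by (simp add: power_mult[symmetric] mult.commute)
qed

lemma val_ge_add_pow_prime_power:
  assumes "val_ge 0 x" "val_ge 0 w"
  shows "val_ge 1 ((x + w) ^ (p ^ j) - x ^ (p ^ j) - w ^ (p ^ j))"
proof -
  have "val_ge 1 ((\<Sum>b\<in>UNIV. if b then x else w) ^ (p ^ j) - (\<Sum>b\<in>UNIV. (if b then x else w) ^ (p ^ j)))"
    using assms by (intro val_ge_sum_pow_prime_power) auto
  then show ?thesis by (simp add: UNIV_bool algebra_simps)
qed

end

section \<open>Teichmueller lifts\<close>

locale Lp_field =
  fixes p :: nat and T :: "'k::field \<Rightarrow> 'L::field" and v :: "'L \<Rightarrow> rat" and pw :: "rat \<Rightarrow> 'L"
  assumes Lp: "Lp_structure p T v pw"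
    and prime_char: "Factorial_Ring.prime p"
    and CHAR_residue: "CHAR('k) = p"
begin

lemma pw_add: "pw (x + y) = pw x * pw y"
  and pw_one: "pw 1 = of_nat p"
  and pw_nonzero: "pw x \<noteq> 0"
  and v_pw: "v (pw x) = x"
  and T_zero: "T 0 = 0"
  and T_one: "T 1 = 1"
  and T_mult: "T (a * b) = T a * T b"
  and v_T: "a \<noteq> 0 \<Longrightarrow> v (T a) = 0"
  using Lp unfolding Lp_structure_def by blast+

sublocale p_valued_field v p
proof unfold_locales
  show "(of_nat p :: 'L) \<noteq> 0" "v (of_nat p) = 1"
    using pw_nonzero[of 1] v_pw[of 1] by (simp_all add: pw_one)
qed (use Lp prime_char in \<open>auto simp: Lp_structure_def\<close>)

lemma T_add_val_gt: "val_gt 0 (T a + T b - T (a + b))"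
  using Lp unfolding Lp_structure_def val_gt_def by auto

lemma pw_zero: "pw 0 = 1"
  using pw_add[of 0 0] pw_nonzero[of 0] by simp

lemma pw_of_nat_mult: "pw (of_nat k * x) = pw x ^ k"
  by (induction k) (simp_all add: pw_zero pw_add algebra_simps)

lemma val_ge_pw: "val_ge x (pw x)"
  by (simp add: val_ge_def v_pw)

lemma val_ge_pw_nonneg: "0 \<le> x \<Longrightarrow> val_ge 0 (pw x)"
  using val_ge_mono[OF _ val_ge_pw] by simp

lemma T_power: "T (a ^ k) = T a ^ k"
  by (induction k) (simp_all add: T_one T_mult)

lemma T_nonzero: "a \<noteq> 0 \<Longrightarrow> T a \<noteq> 0"
  using T_mult[of a "inverse a"] by (auto simp: T_one)

lemma val_ge_T: "val_ge 0 (T a)"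
  by (cases "a = 0") (auto simp: val_ge_def v_T T_zero)

lemma val_ge_inverse_T: "val_ge 0 (inverse (T a))"
  by (cases "a = 0") (auto simp: val_ge_def v_T T_zero v_inverse T_nonzero)

lemma of_nat_pow_char_power: "(of_nat m :: 'k) ^ (p ^ j) = of_nat m"
proof -
  have "(\<Sum>i<m. 1 :: 'k) ^ (p ^ j) = (\<Sum>i<m. 1 ^ (p ^ j))"
    using prime_char CHAR_residue by (intro freshmans_dream_sum') simp_all
  then show ?thesis by simp
qed

lemma T_of_nat_pow_char_power: "T (of_nat m) ^ (p ^ j) = T (of_nat m)"
  by (simp add: of_nat_pow_char_power flip: T_power)

lemma T_of_nat_val_gt: "val_gt 0 (T (of_nat k) - of_nat k)"
proof (induction k)
  case 0
  then show ?case by (simp add: T_zero val_gt_def)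
next
  case (Suc k)
  have "T (of_nat (Suc k)) - of_nat (Suc k)
      = (T (of_nat k) - of_nat k) - (T (of_nat k) + T 1 - T (of_nat k + 1))"
    by (simp add: T_one add.commute)
  then show ?case using val_gt_diff[OF Suc T_add_val_gt] by metis
qed

text \<open>Since [k]^p = [k], the difference d = [k] - k satisfies
  v d >= min (1 + v d) (min (p v d) 1), which forces v d >= 1.\<close>

lemma teichmuller_of_nat_cong: "val_ge 1 (T (of_nat k) - of_nat k)"
proof (cases "T (of_nat k) = of_nat k")
  case False
  define x where "x = (of_nat k :: 'L)"
  define d where "d = T (of_nat k) - x"
  define s where "s = v d"
  have d0: "d \<noteq> 0" using False by (simp add: d_def x_def)
  have s0: "0 < s" using T_of_nat_val_gt[of k] d0 by (simp add: s_def d_def x_def val_gt_def)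
  have "T (of_nat k) ^ p = T (of_nat k)"
    using T_of_nat_pow_char_power[of k 1] by simp
  then have split: "d = ((d + x) ^ p - d ^ p - x ^ p) + d ^ p + (x ^ p - x)"
    by (simp add: d_def)
  have "val_ge (1 + s + 0) ((d + x) ^ p - d ^ p - x ^ p)"
    using s0 by (intro val_ge_add_pow_prime[OF val_ge_of_nat[of k, folded x_def]])
      (simp_all add: val_ge_def s_def)
  moreover have "val_ge (of_nat p * s) (d ^ p)"
    by (intro val_ge_power) (simp add: val_ge_def s_def)
  moreover have "val_ge 1 (x ^ p - x)"
  proof -
    have "(of_nat (k ^ p) :: 'k) = of_nat k"
      using of_nat_pow_char_power[of k 1] by simp
    then have "[int (k ^ p) = int k] (mod int p)"
      unfolding of_nat_eq_iff_cong_CHAR CHAR_residue cong_int_iff .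
    then have "int p dvd int (k ^ p) - int k"
      by (simp add: cong_iff_dvd_diff)
    then show ?thesis
      using val_ge_of_int_dvd[of 1 "int (k ^ p) - int k"] by (simp add: x_def)
  qed
  ultimately have "val_ge (min (1 + s) (min (of_nat p * s) 1)) d"
    by (subst split, intro val_ge_add) (auto elim: val_ge_mono[rotated])
  then have "min (1 + s) (min (of_nat p * s) 1) \<le> s"
    using d0 by (simp add: val_ge_def s_def)
  moreover have "s < of_nat p * s"
    using s0 prime_gt_1_nat[OF prime_char] by simp
  ultimately have "1 \<le> s" by linarith
  then show ?thesis by (simp add: val_ge_def s_def d_def x_def)
qed simp

lemma v_of_nat_coprime:
  assumes "\<not> p dvd k"
  shows "(of_nat k :: 'L) \<noteq> 0 \<and> v (of_nat k) = 0"
proof -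
  have a: "(of_nat k :: 'k) \<noteq> 0"
    using assms by (simp add: of_nat_eq_0_iff_char_dvd CHAR_residue)
  have "val_gt (v (T (of_nat k))) (of_nat k - T (of_nat k))"
    using val_gt_uminus[OF T_of_nat_val_gt[of k]] v_T[OF a] by simp
  then show ?thesis
    using v_add_eq_if_val_gt[OF T_nonzero[OF a]] v_T[OF a] by fastforce
qed

lemma T_minus_one:
  assumes "p \<noteq> 2"
  shows "T (-1) = -1"
proof (rule ccontr)
  assume "T (-1) \<noteq> -1"
  moreover have "T (-1) ^ 2 = 1"
    by (simp add: T_one flip: T_power)
  ultimately have "T (-1) + T 1 - T (-1 + 1) = 2"
    by (simp add: power2_eq_1_iff T_one T_zero)
  moreover have "\<not> p dvd 2"
    using assms prime_ge_2_nat[OF prime_char] by (auto dest: dvd_imp_le)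
  ultimately show False
    using T_add_val_gt[of "-1" 1] v_of_nat_coprime[of 2] by (simp add: val_gt_def)
qed

section \<open>The p-th power of the truncated exponential\<close>

lemma rat_p_facts:
  "(2::rat) \<le> of_nat p"
  "0 < 1 / (of_nat p * (of_nat p - 1) :: rat)"
  "of_nat p * (1 / (of_nat p * (of_nat p - 1))) = 1 / (of_nat p - 1 :: rat)"
  "1 / (of_nat p - 1 :: rat) \<le> 1"
  using prime_ge_2_nat[OF prime_char] by (simp_all add: of_nat_le_iff[symmetric])

lemma T_fact_nonzero: "k < p \<Longrightarrow> T (of_nat (fact k)) \<noteq> 0"
  using prime_dvd_fact_iff[OF prime_char, of k]
  by (intro T_nonzero) (simp add: of_nat_eq_0_iff_char_dvd CHAR_residue)

lemma val_ge_fact_mult_exp_trunc: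
  assumes "val_ge 0 y"
  shows "val_ge 1 (of_nat (fact (p - 1)) * (\<Sum>k<p. y ^ k / T (of_nat (fact k)))
    - poly (of_int_poly (scaled_exp_poly p)) y)"
proof -
  have "val_ge 1 (of_nat (fact (p - 1)) * (y ^ k / T (of_nat (fact k)))
      - of_int (scaled_exp_coeff p k) * y ^ k)" if "k < p" for k
  proof -
    have "of_nat (fact (p - 1)) * (y ^ k / T (of_nat (fact k))) - of_int (scaled_exp_coeff p k) * y ^ k
        = y ^ k * of_int (scaled_exp_coeff p k) * ((of_nat (fact k) - T (of_nat (fact k)))
          * inverse (T (of_nat (fact k))))"
      using T_fact_nonzero[OF that] scaled_exp_coeff_mult_fact[OF that, where 'a='L]
      by (simp add: field_simps)
    moreover have "val_ge (0 + 0 + (1 + 0)) (y ^ k * of_int (scaled_exp_coeff p k)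
        * ((of_nat (fact k) - T (of_nat (fact k))) * inverse (T (of_nat (fact k)))))"
      using val_ge_uminus[OF teichmuller_of_nat_cong[of "fact k"]]
      by (intro val_ge_mult val_ge_power_nonneg assms val_ge_of_int val_ge_inverse_T) simp
    ultimately show ?thesis by simp
  qed
  then show ?thesis
    unfolding poly_of_int_scaled_exp_poly sum_distrib_left sum_subtractf[symmetric]
    by (intro val_ge_sum) simp
qed

lemma val_ge_scaled_exp_pow_prime_cong:
  assumes "val_ge (1 / (of_nat p * (of_nat p - 1))) y"
  shows "val_ge (1 + 1 / (of_nat p - 1)) (poly (of_int_poly (scaled_exp_poly p)) y ^ p
    - of_nat p * of_nat (fact (p - 1)) ^ p * y
    - (\<Sum>k<p. of_int (scaled_exp_coeff p k) ^ p * y ^ (k * p)))"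
proof -
  define R where "R = scaled_exp_poly p ^ p - monom (int p * fact (p - 1) ^ p) 1
    - (\<Sum>k<p. monom (scaled_exp_coeff p k ^ p) (k * p))"
  have "val_ge (1 + 1 / (of_nat p - 1)) (of_int (coeff R d) * y ^ d)" for d
  proof (cases "d < p")
    case True
    then have "val_ge (of_nat 2 + 0) (of_int (coeff R d) * y ^ d)"
      using scaled_exp_poly_pow_prime_cong(1)[OF prime_char] val_ge_mono[OF _ assms] rat_p_facts
      by (intro val_ge_mult val_ge_of_int_dvd val_ge_power_nonneg) (auto simp: R_def)
    then show ?thesis
      using rat_p_facts by (elim val_ge_mono[rotated]) simp
  next
    case False
    have "val_ge (of_nat p * (1 / (of_nat p * (of_nat p - 1)))) (y ^ d)"
      using False rat_p_facts by (intro val_ge_power_mono[OF assms]) auto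
    then have "val_ge (of_nat 1 + 1 / (of_nat p - 1)) (of_int (coeff R d) * y ^ d)"
      using scaled_exp_poly_pow_prime_cong(2)[OF prime_char] rat_p_facts
      by (intro val_ge_mult val_ge_of_int_dvd) (auto simp: R_def)
    then show ?thesis by simp
  qed
  then have "val_ge (1 + 1 / (of_nat p - 1)) (poly (of_int_poly R) y)"
    by (rule val_ge_poly)
  then show ?thesis
    by (simp add: R_def of_int_poly_hom.hom_power of_int_poly_hom.hom_sum of_int_poly_hom.hom_minus
        of_int_hom.map_poly_hom_monom poly_sum poly_monom of_int_fact_eq_of_nat)
qed

lemma val_ge_exp_trunc_frobenius_terms:
  assumes "val_ge (1 / (of_nat p * (of_nat p - 1))) y"
  shows "val_ge (1 + 1 / (of_nat p - 1)) ((\<Sum>k<p. of_int (scaled_exp_coeff p k) ^ p * y ^ (k * p))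
    - of_nat (fact (p - 1)) ^ p * (\<Sum>k<p. y ^ (k * p) / T (of_nat (fact k))))"
proof -
  have "val_ge (1 + 1 / (of_nat p - 1)) (y ^ (k * p)
      * (of_int (scaled_exp_coeff p k) ^ p - of_nat (fact (p - 1)) ^ p / T (of_nat (fact k))))"
    if k: "k < p" for k
  proof (cases "k = 0")
    case True
    then show ?thesis
      using scaled_exp_coeff_mult_fact[of 0 p, where 'a='L] k by (simp add: T_one)
  next
    case False
    let ?t = "T (of_nat (fact k))"
    have "?t ^ p = ?t"
      using T_of_nat_pow_char_power[of "fact k" 1] by simp
    then have "of_int (scaled_exp_coeff p k) ^ p - of_nat (fact (p - 1)) ^ p / ?t
        = of_int (scaled_exp_coeff p k) ^ p * ((?t ^ p - of_nat (fact k) ^ p) * inverse ?t)"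
      using T_fact_nonzero[OF k] scaled_exp_coeff_mult_fact[OF k, where 'a='L, symmetric]
      by (simp add: field_simps power_mult_distrib)
    moreover have "val_ge (0 + (1 + 0))
        (of_int (scaled_exp_coeff p k) ^ p * ((?t ^ p - of_nat (fact k) ^ p) * inverse ?t))"
      using teichmuller_of_nat_cong[of "fact k"]
      by (intro val_ge_mult val_ge_power_nonneg val_ge_of_int val_ge_inverse_T
          val_ge_pow_diff val_ge_T val_ge_of_nat)
    moreover have "val_ge (of_nat p * (1 / (of_nat p * (of_nat p - 1)))) (y ^ (k * p))"
      using False rat_p_facts by (intro val_ge_power_mono[OF assms]) auto
    ultimately have "val_ge (1 / (of_nat p - 1) + 1) (y ^ (k * p)
        * (of_int (scaled_exp_coeff p k) ^ p - of_nat (fact (p - 1)) ^ p / ?t))"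
      using rat_p_facts by (intro val_ge_mult) simp_all
    then show ?thesis by (simp add: add.commute)
  qed
  then show ?thesis
    unfolding sum_distrib_left sum_subtractf[symmetric]
    by (intro val_ge_sum) (simp add: algebra_simps)
qed

text \<open>Multiplying by (p-1)! turns the truncated exponential into the integer polynomial
  scaled_exp_poly p, to which scaled_exp_poly_pow_prime_cong applies.\<close>

lemma val_ge_exp_trunc_pow_prime:
  assumes y: "val_ge (1 / (of_nat p * (of_nat p - 1))) y"
  shows "val_ge (1 + 1 / (of_nat p - 1)) ((\<Sum>k<p. y ^ k / T (of_nat (fact k))) ^ p
    - (of_nat p * y + (\<Sum>k<p. y ^ (k * p) / T (of_nat (fact k)))))"
proof -
  define P :: rat where "P = 1 + 1 / (of_nat p - 1)"
  define D where "D = (of_nat (fact (p - 1)) :: 'L)"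
  define E where "E = (\<Sum>k<p. y ^ k / T (of_nat (fact k)))"
  define F where "F = poly (of_int_poly (scaled_exp_poly p)) y"
  have y0: "val_ge 0 y"
    using val_ge_mono[OF _ y] rat_p_facts by simp
  have "val_ge 0 F"
    unfolding F_def poly_of_int_scaled_exp_poly
    by (intro val_ge_sum) (metis add_0 val_ge_mult val_ge_of_int val_ge_power_nonneg[OF y0])
  then have "val_ge (min (1 + 1) (of_nat p * 1)) ((D * E) ^ p - F ^ p)"
    using val_ge_fact_mult_exp_trunc[OF y0]
    by (intro val_ge_pow_prime_diff) (simp_all add: D_def E_def F_def)
  then have "val_ge P ((D * E) ^ p - F ^ p)"
    using rat_p_facts by (elim val_ge_mono[rotated]) (simp add: P_def)
  then have "val_ge P (((D * E) ^ p - F ^ p)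
      + (F ^ p - of_nat p * D ^ p * y - (\<Sum>k<p. of_int (scaled_exp_coeff p k) ^ p * y ^ (k * p)))
      + ((\<Sum>k<p. of_int (scaled_exp_coeff p k) ^ p * y ^ (k * p))
        - D ^ p * (\<Sum>k<p. y ^ (k * p) / T (of_nat (fact k)))))"
    using val_ge_scaled_exp_pow_prime_cong[OF y] val_ge_exp_trunc_frobenius_terms[OF y]
    by (intro val_ge_add) (simp_all add: P_def D_def F_def)
  then have "val_ge P (D ^ p * (E ^ p - (of_nat p * y + (\<Sum>k<p. y ^ (k * p) / T (of_nat (fact k))))))"
    by (simp add: algebra_simps power_mult_distrib)
  moreover have "D ^ p \<noteq> 0" "v (D ^ p) = 0"
    using v_of_nat_coprime[of "fact (p - 1)"] prime_dvd_fact_iff[OF prime_char, of "p - 1"] p_pos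
    by (simp_all add: D_def v_power)
  ultimately have "val_ge (0 + P) (inverse (D ^ p)
      * (D ^ p * (E ^ p - (of_nat p * y + (\<Sum>k<p. y ^ (k * p) / T (of_nat (fact k)))))))"
    by (intro val_ge_mult val_ge_inverse_unit)
  then show ?thesis
    using \<open>D ^ p \<noteq> 0\<close> by (simp add: P_def E_def mult.assoc[symmetric])
qed

end

section \<open>Powers of Lambda\<close>

locale Lambda_setting = Lp_field p T v pw
  for p :: nat and T :: "'k::field \<Rightarrow> 'L::field" and v :: "'L \<Rightarrow> rat" and pw :: "rat \<Rightarrow> 'L" +
  fixes \<zeta> :: 'k and n :: nat
  assumes odd_p: "odd p"
    and n_ge_2: "n \<ge> 2"
    and zeta_pow_pred: "\<zeta> ^ (p - 1) = -1"
begin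

definition Lambda_term :: "nat \<Rightarrow> 'L" where
  "Lambda_term k = (-1) ^ (k * n) / T (of_nat (fact k)) * T \<zeta> ^ k
     * pw (of_nat k / (of_nat p ^ (n - 1) * (of_nat p - 1)))"

definition Lambda_tail_term :: "nat \<Rightarrow> 'L" where
  "Lambda_tail_term l = (-1) ^ n * T \<zeta> * pw (1 / (of_nat p ^ (n - 2) * (of_nat p - 1)) - 1 / of_nat p ^ l)"

definition exp_arg :: 'L where
  "exp_arg = T \<zeta> * pw (1 / (of_nat p * (of_nat p - 1)))"

definition tail_term :: "nat \<Rightarrow> 'L" where
  "tail_term j = T \<zeta> * pw (1 / (of_nat p - 1) - 1 / of_nat p ^ j)"

lemma Lambda_split:
  "Lambda p T pw \<zeta> i n = (\<Sum>k = 0..min i (p - 1). Lambda_term k)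
     + (if p \<le> i then \<Sum>l = n..i - p + n. Lambda_tail_term l else 0)"
  unfolding Lambda_def Lambda_term_def Lambda_tail_term_def by simp

lemma T_zeta_pow_p: "T \<zeta> ^ p = - T \<zeta>"
proof -
  have "\<zeta> ^ p = \<zeta> ^ (p - 1) * \<zeta>"
    using p_pos by (metis power_Suc2 Suc_diff_1)
  then have "T (\<zeta> ^ p) = T (-1) * T \<zeta>"
    unfolding zeta_pow_pred by (simp add: T_mult[symmetric])
  moreover have "p \<noteq> 2" using odd_p by auto
  ultimately show ?thesis
    using T_minus_one by (simp add: T_power)
qed

lemma T_zeta_pow_p_power: "T \<zeta> ^ (p ^ j) = (-1) ^ j * T \<zeta>"
proof (induction j)
  case (Suc j)
  have "T \<zeta> ^ (p ^ Suc j) = (T \<zeta> ^ (p ^ j)) ^ p"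
    by (simp add: power_mult[symmetric] mult.commute)
  also have "\<dots> = ((-1) ^ j * T \<zeta>) ^ p"
    by (simp only: Suc)
  also have "\<dots> = (-1) ^ j * T \<zeta> ^ p"
    using odd_p by (simp add: power_mult_distrib power_mult[symmetric] mult.commute[of j] power_mult)
  finally show ?case by (simp add: T_zeta_pow_p)
qed simp

lemma odd_pow_minus_one: "odd m \<Longrightarrow> ((-1 :: 'L) ^ a) ^ m = (-1) ^ a"
  by (simp add: power_mult[symmetric] mult.commute[of a] power_mult)

lemma Lambda_term_power:
  assumes "k < p"
  shows "Lambda_term k ^ (p ^ (n - 2)) = exp_arg ^ k / T (of_nat (fact k))"
proof -
  obtain m where n: "n = Suc (Suc m)" using n_ge_2 by (metis add_2_eq_Suc le_Suc_ex)
  have odd_M: "odd (p ^ m)" using odd_p by simp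
  have "T (of_nat (fact k)) ^ (p ^ m) = T (of_nat (fact k))"
    by (rule T_of_nat_pow_char_power)
  moreover have "pw (of_nat k / (of_nat p ^ Suc m * (of_nat p - 1))) ^ (p ^ m)
      = pw (1 / (of_nat p * (of_nat p - 1))) ^ k"
  proof -
    have "of_nat (p ^ m) * (of_nat k / (of_nat p ^ Suc m * (of_nat p - 1)))
        = of_nat k * (1 / (of_nat p * (of_nat p - 1)) :: rat)"
      using rat_p_facts(1) by (simp add: field_simps)
    then show ?thesis by (metis pw_of_nat_mult)
  qed
  moreover have "Lambda_term k ^ (p ^ m) = ((-1) ^ (k * n)) ^ (p ^ m) / T (of_nat (fact k)) ^ (p ^ m)
      * (T \<zeta> ^ (p ^ m)) ^ k * pw (of_nat k / (of_nat p ^ Suc m * (of_nat p - 1))) ^ (p ^ m)"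
    unfolding Lambda_term_def
    by (simp add: n power_mult_distrib power_divide power_mult[symmetric] mult.commute)
  ultimately have "Lambda_term k ^ (p ^ m)
      = (-1) ^ (k * n) / T (of_nat (fact k)) * ((-1) ^ m * T \<zeta>) ^ k * pw (1 / (of_nat p * (of_nat p - 1))) ^ k"
    by (simp only: odd_pow_minus_one[OF odd_M] T_zeta_pow_p_power)
  also have "\<dots> = exp_arg ^ k / T (of_nat (fact k))"
    unfolding exp_arg_def n
    by (simp add: power_mult_distrib field_simps power_mult[symmetric] power_add[symmetric])
  finally show ?thesis by (simp add: n)
qed

lemma Lambda_tail_term_power:
  assumes "n \<le> l"
  shows "Lambda_tail_term l ^ (p ^ (n - 2)) = tail_term (l + 2 - n)"
proof -
  obtain m where n: "n = Suc (Suc m)" using n_ge_2 by (metis add_2_eq_Suc le_Suc_ex)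
  have odd_M: "odd (p ^ m)" using odd_p by simp
  have "pw (1 / (of_nat p ^ m * (of_nat p - 1)) - 1 / of_nat p ^ l) ^ (p ^ m)
      = pw (1 / (of_nat p - 1) - 1 / of_nat p ^ (l - m))"
  proof -
    have "(of_nat p :: rat) ^ l = of_nat p ^ m * of_nat p ^ (l - m)"
      using assms n by (simp flip: power_add)
    then have "of_nat (p ^ m) * (1 / (of_nat p ^ m * (of_nat p - 1)) - 1 / of_nat p ^ l)
        = 1 / (of_nat p - 1) - 1 / (of_nat p ^ (l - m) :: rat)"
      using rat_p_facts(1) by (simp add: field_simps)
    then show ?thesis by (metis pw_of_nat_mult)
  qed
  moreover have "Lambda_tail_term l ^ (p ^ m) = ((-1) ^ n) ^ (p ^ m) * T \<zeta> ^ (p ^ m)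
      * pw (1 / (of_nat p ^ m * (of_nat p - 1)) - 1 / of_nat p ^ l) ^ (p ^ m)"
    unfolding Lambda_tail_term_def by (simp add: n power_mult_distrib)
  ultimately have "Lambda_tail_term l ^ (p ^ m) = ((-1) ^ n * (-1) ^ m) * T \<zeta>
      * pw (1 / (of_nat p - 1) - 1 / of_nat p ^ (l - m))"
    by (simp only: odd_pow_minus_one[OF odd_M] T_zeta_pow_p_power mult.assoc)
  then show ?thesis
    unfolding tail_term_def by (simp add: n flip: power_add)
qed

lemma val_ge_exp_arg: "val_ge (1 / (of_nat p * (of_nat p - 1))) exp_arg"
  unfolding exp_arg_def using val_ge_mult[OF val_ge_T val_ge_pw] by simp

lemma val_ge_tail_term: "val_ge (1 / (of_nat p - 1) - 1 / of_nat p ^ j) (tail_term j)"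
  unfolding tail_term_def using val_ge_mult[OF val_ge_T val_ge_pw] by simp

lemma tail_exponent_nonneg:
  assumes "1 \<le> j"
  shows "0 \<le> 1 / (of_nat p - 1) - 1 / (of_nat p ^ j :: rat)"
proof -
  have "(of_nat p :: rat) ^ 1 \<le> of_nat p ^ j"
    using assms rat_p_facts(1) by (intro power_increasing) auto
  then have "(of_nat p :: rat) - 1 \<le> of_nat p ^ j"
    unfolding power_one_right by linarith
  then show ?thesis
    using rat_p_facts(1) by (simp add: frac_le)
qed

lemma val_ge_Lambda_term: "val_ge 0 (Lambda_term k)"
proof -
  have "val_ge (0 + 0 + 0 + 0) ((-1) ^ (k * n) * inverse (T (of_nat (fact k))) * T \<zeta> ^ k
      * pw (of_nat k / (of_nat p ^ (n - 1) * (of_nat p - 1))))"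
    using rat_p_facts(1)
    by (intro val_ge_mult val_ge_power_nonneg val_ge_uminus val_ge_one val_ge_inverse_T val_ge_T
        val_ge_pw_nonneg) simp
  then show ?thesis unfolding Lambda_term_def by (simp add: divide_inverse)
qed

lemma val_ge_Lambda_tail_term:
  assumes "n \<le> l"
  shows "val_ge 0 (Lambda_tail_term l)"
proof -
  have "(of_nat p :: rat) ^ (n - 2) * (of_nat p - 1) \<le> of_nat p ^ (n - 2) * of_nat p"
    by (intro mult_left_mono) auto
  also have "\<dots> = of_nat p ^ Suc (n - 2)"
    by simp
  also have "\<dots> \<le> of_nat p ^ l"
    using assms n_ge_2 rat_p_facts(1) by (intro power_increasing) auto
  finally have "0 \<le> 1 / (of_nat p ^ (n - 2) * (of_nat p - 1)) - 1 / (of_nat p ^ l :: rat)"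
    using rat_p_facts(1) by (simp add: frac_le)
  then have "val_ge (0 + 0 + 0) ((-1) ^ n * T \<zeta>
      * pw (1 / (of_nat p ^ (n - 2) * (of_nat p - 1)) - 1 / of_nat p ^ l))"
    by (intro val_ge_mult val_ge_power_nonneg val_ge_uminus val_ge_one val_ge_T val_ge_pw_nonneg)
  then show ?thesis unfolding Lambda_tail_term_def by simp
qed

definition Lambda_power_approx :: "nat \<Rightarrow> 'L" where
  "Lambda_power_approx i = (\<Sum>k = 0..min i (p - 1). exp_arg ^ k / T (of_nat (fact k)))
     + (if p \<le> i then \<Sum>j = 2..i + 2 - p. tail_term j else 0)"

lemma val_ge_Lambda_power_approx: "val_ge 0 (Lambda_power_approx i)"
proof -
  have "val_ge 0 (exp_arg ^ k / T (of_nat (fact k)))" for k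
    using val_ge_mult[OF val_ge_power_nonneg val_ge_inverse_T, of exp_arg k "of_nat (fact k)"]
      val_ge_mono[OF _ val_ge_exp_arg] rat_p_facts(2)
    by (simp add: divide_inverse)
  moreover have "val_ge 0 (tail_term j)" if "2 \<le> j" for j
    using val_ge_mono[OF tail_exponent_nonneg val_ge_tail_term] that by simp
  ultimately show ?thesis
    unfolding Lambda_power_approx_def by (auto intro!: val_ge_add val_ge_sum)
qed

lemma Lambda_tail_sum_power:
  assumes "p \<le> i"
  shows "(\<Sum>l = n..i - p + n. Lambda_tail_term l ^ (p ^ (n - 2))) = (\<Sum>j = 2..i + 2 - p. tail_term j)"
proof -
  obtain m where n: "n = m + 2" using n_ge_2 by (metis add.commute le_Suc_ex)
  have "(\<Sum>l = n..i - p + n. Lambda_tail_term l ^ (p ^ (n - 2))) = (\<Sum>l = n..i - p + n. tail_term (l + 2 - n))"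
    by (intro sum.cong refl Lambda_tail_term_power) auto
  also have "\<dots> = (\<Sum>l = 2 + m..(i + 2 - p) + m. tail_term (l - m))"
    using assms n by (intro sum.cong) auto
  also have "\<dots> = (\<Sum>j = 2..i + 2 - p. tail_term j)"
    unfolding sum.shift_bounds_cl_nat_ivl by simp
  finally show ?thesis .
qed

lemma Lambda_power_cong: "val_ge 1 (Lambda p T pw \<zeta> i n ^ (p ^ (n - 2)) - Lambda_power_approx i)"
proof -
  define M where "M = p ^ (n - 2)"
  define A where "A = (\<Sum>k = 0..min i (p - 1). Lambda_term k)"
  define B where "B = (if p \<le> i then \<Sum>l = n..i - p + n. Lambda_tail_term l else 0)"
  define S where "S = (\<Sum>k = 0..min i (p - 1). exp_arg ^ k / T (of_nat (fact k)))"
  define W where "W = (if p \<le> i then \<Sum>j = 2..i + 2 - p. tail_term j else 0)"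
  have "val_ge 0 A" unfolding A_def by (intro val_ge_sum val_ge_Lambda_term)
  moreover have "val_ge 0 B" unfolding B_def by (auto intro!: val_ge_sum val_ge_Lambda_tail_term)
  ultimately have "val_ge 1 ((A + B) ^ M - A ^ M - B ^ M)"
    unfolding M_def by (rule val_ge_add_pow_prime_power)
  moreover have "val_ge 1 (A ^ M - S)"
  proof -
    have "val_ge 1 (A ^ M - (\<Sum>k = 0..min i (p - 1). Lambda_term k ^ M))"
      unfolding A_def M_def by (intro val_ge_sum_pow_prime_power val_ge_Lambda_term) simp
    moreover have "(\<Sum>k = 0..min i (p - 1). Lambda_term k ^ M) = S"
      unfolding S_def M_def using p_pos by (intro sum.cong refl Lambda_term_power) auto
    ultimately show ?thesis by simp
  qed
  moreover have "val_ge 1 (B ^ M - W)"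
  proof (cases "p \<le> i")
    case True
    have "val_ge 1 (B ^ M - (\<Sum>l = n..i - p + n. Lambda_tail_term l ^ M))"
      unfolding B_def M_def using True by (simp only: if_True) (intro val_ge_sum_pow_prime_power
          val_ge_Lambda_tail_term; simp)
    then show ?thesis
      using Lambda_tail_sum_power[OF True] True by (simp add: W_def M_def)
  next
    case False
    then show ?thesis using p_pos by (simp add: B_def W_def M_def zero_power)
  qed
  ultimately have "val_ge 1 (((A + B) ^ M - A ^ M - B ^ M) + (A ^ M - S) + (B ^ M - W))"
    by (intro val_ge_add)
  then show ?thesis
    unfolding Lambda_split Lambda_power_approx_def A_def[symmetric] B_def[symmetric]
      S_def[symmetric] W_def[symmetric] M_def[symmetric]
    by (simp add: algebra_simps)
qed

lemma Lambda_power_prime_cong: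
  "val_ge 2 (Lambda p T pw \<zeta> i n ^ (p ^ (n - 1)) - Lambda_power_approx i ^ p)"
proof -
  have "n - 1 = Suc (n - 2)"
    using n_ge_2 by simp
  then have M: "p ^ (n - 1) = p ^ (n - 2) * p"
    by (simp only: power_Suc2)
  have "val_ge (min (1 + 1) (of_nat p * 1)) ((Lambda p T pw \<zeta> i n ^ (p ^ (n - 2))) ^ p - Lambda_power_approx i ^ p)"
    using Lambda_power_cong val_ge_Lambda_power_approx by (intro val_ge_pow_prime_diff) simp_all
  then show ?thesis
    unfolding M power_mult using rat_p_facts(1) by simp
qed

lemma exp_term_pow_prime:
  assumes "k < p"
  shows "(exp_arg ^ k / T (of_nat (fact k))) ^ p
    = (-1) ^ k / T (of_nat (fact k)) * T \<zeta> ^ k * pw (of_nat k / (of_nat p - 1))"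
proof -
  have "T (of_nat (fact k)) ^ p = T (of_nat (fact k))"
    using T_of_nat_pow_char_power[of "fact k" 1] by simp
  moreover have "pw (1 / (of_nat p * (of_nat p - 1))) ^ (k * p) = pw (of_nat k / (of_nat p - 1))"
  proof -
    have "of_nat (k * p) * (1 / (of_nat p * (of_nat p - 1))) = (of_nat k / (of_nat p - 1) :: rat)"
      using rat_p_facts(1) by (simp add: field_simps)
    then show ?thesis by (metis pw_of_nat_mult)
  qed
  moreover have "T \<zeta> ^ (k * p) = (-1) ^ k * T \<zeta> ^ k"
    unfolding mult.commute[of k p] power_mult T_zeta_pow_p by (rule power_minus)
  moreover have "(exp_arg ^ k / T (of_nat (fact k))) ^ p
      = T \<zeta> ^ (k * p) * pw (1 / (of_nat p * (of_nat p - 1))) ^ (k * p) / T (of_nat (fact k)) ^ p"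
    unfolding exp_arg_def power_divide power_mult_distrib power_mult ..
  ultimately show ?thesis
    by simp
qed

lemma val_ge_exp_term:
  assumes "1 \<le> k"
  shows "val_ge (1 / (of_nat p * (of_nat p - 1))) (exp_arg ^ k / T (of_nat (fact k)))"
proof -
  have "val_ge (of_nat 1 * (1 / (of_nat p * (of_nat p - 1))) + 0) (exp_arg ^ k * inverse (T (of_nat (fact k))))"
    using assms rat_p_facts(2)
    by (intro val_ge_mult val_ge_power_mono[OF val_ge_exp_arg] val_ge_inverse_T) simp_all
  then show ?thesis by (simp add: divide_inverse)
qed

lemma val_ge_exp_trunc_minus_one:
  "val_ge (1 / (of_nat p * (of_nat p - 1))) ((\<Sum>k<p. exp_arg ^ k / T (of_nat (fact k))) - 1)"
proof -
  have "{..<p} = insert 0 {1..<p}" using p_pos by auto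
  then have "(\<Sum>k<p. exp_arg ^ k / T (of_nat (fact k))) - 1 = (\<Sum>k\<in>{1..<p}. exp_arg ^ k / T (of_nat (fact k)))"
    by (simp add: T_one)
  then show ?thesis by (auto intro!: val_ge_sum val_ge_exp_term)
qed

lemma sum_exp_term_pow_prime:
  "(\<Sum>k<p. exp_arg ^ (k * p) / T (of_nat (fact k)))
    = 1 + (\<Sum>l = 1..p - 1. (-1) ^ l / T (of_nat (fact l)) * T \<zeta> ^ l * pw (of_nat l / (of_nat p - 1)))"
proof -
  have "(\<Sum>k<p. exp_arg ^ (k * p) / T (of_nat (fact k))) = (\<Sum>k<p. (exp_arg ^ k / T (of_nat (fact k))) ^ p)"
    using T_of_nat_pow_char_power[of "fact _" 1]
    by (intro sum.cong refl) (simp add: power_divide power_mult)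
  also have "\<dots> = (\<Sum>k<p. (-1) ^ k / T (of_nat (fact k)) * T \<zeta> ^ k * pw (of_nat k / (of_nat p - 1)))"
    by (intro sum.cong refl exp_term_pow_prime) simp
  also have "\<dots> = 1 + (\<Sum>l = 1..p - 1. (-1) ^ l / T (of_nat (fact l)) * T \<zeta> ^ l * pw (of_nat l / (of_nat p - 1)))"
  proof -
    have "{..<p} = insert 0 {1..p - 1}" using p_pos by auto
    then show ?thesis by (simp add: T_one pw_zero)
  qed
  finally show ?thesis .
qed

lemma Lambda_power_expansion_short:
  assumes "1 \<le> i" "i < p - 1"
  shows "bigO_eq v (Lambda p T pw \<zeta> i n ^ (p ^ (n - 1)) - 1)
    (\<Sum>l = 1..i. (-1) ^ l / T (of_nat (fact l)) * T \<zeta> ^ l * pw (of_nat l / (of_nat p - 1)))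
    (1 + 1 / (of_nat p * (of_nat p - 1)))"
proof -
  define r :: rat where "r = 1 / (of_nat p * (of_nat p - 1))"
  define S where "S = (\<Sum>k = 1..i. exp_arg ^ k / T (of_nat (fact k)))"
  have r: "0 < r" "r \<le> 1"
  proof -
    show "0 < r" using rat_p_facts(2) by (simp add: r_def)
    then have "1 * r \<le> of_nat p * r"
      using rat_p_facts(1) by (intro mult_right_mono) simp_all
    then show "r \<le> 1"
      using rat_p_facts(3,4) by (simp add: r_def)
  qed
  have approx: "Lambda_power_approx i = S + 1"
    using assms unfolding Lambda_power_approx_def S_def by (simp add: sum.atLeast_Suc_atMost T_one)
  have S: "val_ge r S"
    unfolding S_def r_def by (intro val_ge_sum val_ge_exp_term) simp
  have "val_ge (1 + r) (Lambda p T pw \<zeta> i n ^ (p ^ (n - 1)) - Lambda_power_approx i ^ p)"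
    using r by (intro val_ge_mono[OF _ Lambda_power_prime_cong]) simp
  moreover have "val_ge (1 + r + 0) ((S + 1) ^ p - S ^ p - 1 ^ p)"
    using S r by (intro val_ge_add_pow_prime val_ge_one) simp_all
  moreover have "val_ge (1 + 2 * r) (S ^ p - (\<Sum>k = 1..i. (exp_arg ^ k / T (of_nat (fact k))) ^ p))"
    unfolding S_def r_def using rat_p_facts(2)
    by (intro val_ge_sum_pow_prime val_ge_exp_term) auto
  ultimately have "val_ge (1 + r) ((Lambda p T pw \<zeta> i n ^ (p ^ (n - 1)) - Lambda_power_approx i ^ p)
      + ((S + 1) ^ p - S ^ p - 1 ^ p) + (S ^ p - (\<Sum>k = 1..i. (exp_arg ^ k / T (of_nat (fact k))) ^ p)))"
    using r by (intro val_ge_add) (auto elim: val_ge_mono[rotated])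
  moreover have "(\<Sum>k = 1..i. (exp_arg ^ k / T (of_nat (fact k))) ^ p)
      = (\<Sum>l = 1..i. (-1) ^ l / T (of_nat (fact l)) * T \<zeta> ^ l * pw (of_nat l / (of_nat p - 1)))"
    using assms by (intro sum.cong refl exp_term_pow_prime) auto
  ultimately show ?thesis
    unfolding approx r_def by (intro bigO_eq_if_val_ge) (simp add: algebra_simps)
qed

lemma tail_exponent_mono:
  assumes "2 \<le> j"
  shows "1 / (of_nat p - 1) - 1 / of_nat p ^ 2 \<le> 1 / (of_nat p - 1) - 1 / (of_nat p ^ j :: rat)"
proof -
  have "(of_nat p :: rat) ^ 2 \<le> of_nat p ^ j"
    using assms rat_p_facts(1) by (intro power_increasing) auto
  then show ?thesis
    using rat_p_facts(1) by (simp add: frac_le)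
qed

lemma tail_exponent_bounds:
  defines "e \<equiv> 1 / (of_nat p - 1) - 1 / (of_nat p ^ 2 :: rat)"
  shows "1 + 1 / (of_nat p - 1) \<le> 1 + 2 * e"
    and "1 + 1 / (of_nat p - 1) \<le> 1 / (of_nat p * (of_nat p - 1)) + 1 + e"
proof -
  define q where "q = (of_nat p :: rat)"
  have q: "2 \<le> q" using rat_p_facts(1) by (simp add: q_def)
  have "0 \<le> (q - 1) ^ 2" by simp
  then have "2 * (q - 1) \<le> q ^ 2"
    by (simp add: power2_eq_square algebra_simps)
  then have "2 / q ^ 2 \<le> 1 / (q - 1)"
    using q by (simp add: field_simps)
  then show "1 + 1 / (of_nat p - 1) \<le> 1 + 2 * e"
    unfolding e_def q_def[symmetric] by simp
  have "1 / q ^ 2 \<le> 1 / (q * (q - 1))"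
    using q by (intro frac_le) (auto simp: power2_eq_square)
  then show "1 + 1 / (of_nat p - 1) \<le> 1 / (of_nat p * (of_nat p - 1)) + 1 + e"
    unfolding e_def q_def[symmetric] by simp
qed

lemma tail_telescope:
  assumes "1 \<le> J"
  shows "of_nat p * (\<Sum>j = 2..J. tail_term j) + (\<Sum>j = 2..J. tail_term j ^ p) + of_nat p * exp_arg
    = T \<zeta> * pw (1 + 1 / (of_nat p - 1) - 1 / of_nat p ^ J)"
proof -
  define f where "f j = T \<zeta> * pw (1 + 1 / (of_nat p - 1) - 1 / of_nat p ^ j)" for j
  have "of_nat p * tail_term j + tail_term j ^ p = f j - f (j - 1)" if "1 \<le> j" for j
  proof -
    have "of_nat p * tail_term j = T \<zeta> * (pw 1 * pw (1 / (of_nat p - 1) - 1 / of_nat p ^ j))"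
      by (simp add: tail_term_def pw_one)
    then have "of_nat p * tail_term j = f j"
      by (simp add: f_def add_diff_eq flip: pw_add)
    moreover have "of_nat p * (1 / (of_nat p - 1) - 1 / of_nat p ^ j)
        = 1 + 1 / (of_nat p - 1) - 1 / (of_nat p ^ (j - 1) :: rat)"
    proof -
      have "(of_nat p :: rat) ^ j = of_nat p * of_nat p ^ (j - 1)"
        using that by (metis power_Suc Suc_diff_1 less_le_trans zero_less_one)
      then show ?thesis using rat_p_facts(1) by (simp add: field_simps)
    qed
    then have "tail_term j ^ p = - f (j - 1)"
      by (simp add: tail_term_def f_def power_mult_distrib T_zeta_pow_p flip: pw_of_nat_mult)
    ultimately show ?thesis by simp
  qed
  then have "of_nat p * (\<Sum>j = 2..J. tail_term j) + (\<Sum>j = 2..J. tail_term j ^ p)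
      = (\<Sum>j = 2..J. f j - f (j - 1))"
    by (simp add: sum_distrib_left flip: sum.distrib)
  also have "\<dots> = f J - f 1"
    using sum_telescope''[OF assms, of f] by (simp add: numeral_2_eq_2)
  also have "of_nat p * exp_arg = f 1"
  proof -
    have "1 + 1 / (of_nat p * (of_nat p - 1)) = 1 + 1 / (of_nat p - 1) - (1 / of_nat p :: rat)"
      using rat_p_facts(1) by (simp add: field_simps)
    then have "pw 1 * pw (1 / (of_nat p * (of_nat p - 1))) = pw (1 + 1 / (of_nat p - 1) - 1 / of_nat p)"
      by (simp add: add_diff_eq flip: pw_add)
    then show ?thesis
      by (simp add: exp_arg_def f_def pw_one)
  qed
  ultimately show ?thesis by (simp add: f_def)
qed

lemma val_ge_exp_tail_pow_prime:
  assumes "1 \<le> J"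
  defines "E \<equiv> \<Sum>k<p. exp_arg ^ k / T (of_nat (fact k))"
    and "W \<equiv> \<Sum>j = 2..J. tail_term j"
  shows "val_ge (1 + 1 / (of_nat p - 1)) ((E + W) ^ p
    - ((\<Sum>k<p. exp_arg ^ (k * p) / T (of_nat (fact k))) + T \<zeta> * pw (1 + 1 / (of_nat p - 1) - 1 / of_nat p ^ J)))"
proof -
  define P :: rat where "P = 1 + 1 / (of_nat p - 1)"
  define e :: rat where "e = 1 / (of_nat p - 1) - 1 / of_nat p ^ 2"
  define r :: rat where "r = 1 / (of_nat p * (of_nat p - 1))"
  have e0: "0 \<le> e" unfolding e_def by (rule tail_exponent_nonneg) simp
  have E1: "val_ge r (E - 1)"
    unfolding E_def r_def by (rule val_ge_exp_trunc_minus_one)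
  then have E0: "val_ge 0 E"
    using val_ge_add[OF val_ge_mono[OF _ E1] val_ge_one] rat_p_facts(2) by (simp add: r_def)
  have W: "val_ge e W"
    unfolding W_def e_def using val_ge_mono[OF tail_exponent_mono val_ge_tail_term]
    by (intro val_ge_sum) simp
  have "val_ge (1 + 2 * e) ((W + E) ^ p - W ^ p - E ^ p - of_nat p * W * E ^ (p - 1))"
    by (rule val_ge_add_pow_prime_linear[OF E0 W e0])
  moreover have "val_ge (r + 1 + e) (of_nat p * W * E ^ (p - 1) - of_nat p * W)"
  proof -
    have "val_ge (r + 1) (of_nat p * (E ^ (p - 1) - 1 ^ (p - 1)))"
      by (intro val_ge_p_mult val_ge_pow_diff E0 val_ge_one E1)
    from val_ge_mult[OF this W] show ?thesis by (simp add: algebra_simps)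
  qed
  moreover have "val_ge (1 + 2 * e) (W ^ p - (\<Sum>j = 2..J. tail_term j ^ p))"
    unfolding W_def e_def using e0[unfolded e_def] val_ge_mono[OF tail_exponent_mono val_ge_tail_term]
    by (intro val_ge_sum_pow_prime) auto
  moreover have "val_ge P (E ^ p - (of_nat p * exp_arg + (\<Sum>k<p. exp_arg ^ (k * p) / T (of_nat (fact k)))))"
    unfolding E_def P_def by (rule val_ge_exp_trunc_pow_prime[OF val_ge_exp_arg])
  ultimately have "val_ge P (((W + E) ^ p - W ^ p - E ^ p - of_nat p * W * E ^ (p - 1))
      + (of_nat p * W * E ^ (p - 1) - of_nat p * W) + (W ^ p - (\<Sum>j = 2..J. tail_term j ^ p))
      + (E ^ p - (of_nat p * exp_arg + (\<Sum>k<p. exp_arg ^ (k * p) / T (of_nat (fact k))))))"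
    using tail_exponent_bounds unfolding P_def e_def r_def
    by (intro val_ge_add) (auto elim: val_ge_mono[rotated])
  then show ?thesis
    unfolding P_def tail_telescope[OF assms(1), symmetric] W_def[symmetric]
    by (simp add: algebra_simps)
qed

lemma Lambda_power_expansion_long:
  assumes "p - 1 \<le> i"
  shows "bigO_eq v (Lambda p T pw \<zeta> i n ^ (p ^ (n - 1)) - 1)
    ((\<Sum>l = 1..p - 1. (-1) ^ l / T (of_nat (fact l)) * T \<zeta> ^ l * pw (of_nat l / (of_nat p - 1)))
      + T \<zeta> * pw (1 + 1 / (of_nat p - 1) - 1 / of_nat p ^ (i + 2 - p)))
    (1 + 1 / (of_nat p - 1))"
proof -
  have approx: "Lambda_power_approx i = (\<Sum>k<p. exp_arg ^ k / T (of_nat (fact k))) + (\<Sum>j = 2..i + 2 - p. tail_term j)"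
  proof -
    have "{0..min i (p - 1)} = {..<p}" using assms p_pos by auto
    moreover have "\<not> p \<le> i \<Longrightarrow> {2..i + 2 - p} = {}" by auto
    ultimately show ?thesis unfolding Lambda_power_approx_def by auto
  qed
  have "val_ge (1 + 1 / (of_nat p - 1)) (Lambda p T pw \<zeta> i n ^ (p ^ (n - 1)) - Lambda_power_approx i ^ p)"
    using rat_p_facts(4) by (intro val_ge_mono[OF _ Lambda_power_prime_cong]) simp
  then have "val_ge (1 + 1 / (of_nat p - 1)) ((Lambda p T pw \<zeta> i n ^ (p ^ (n - 1)) - Lambda_power_approx i ^ p)
      + (Lambda_power_approx i ^ p - (1 + (\<Sum>l = 1..p - 1. (-1) ^ l / T (of_nat (fact l)) * T \<zeta> ^ l
        * pw (of_nat l / (of_nat p - 1))) + T \<zeta> * pw (1 + 1 / (of_nat p - 1) - 1 / of_nat p ^ (i + 2 - p)))))"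
    using val_ge_exp_tail_pow_prime[of "i + 2 - p"] assms
    unfolding approx sum_exp_term_pow_prime[symmetric] by (intro val_ge_add) auto
  then show ?thesis
    by (intro bigO_eq_if_val_ge) (simp add: algebra_simps)
qed

end

lemma power_half_order_eq_minus_one:
  fixes \<zeta> :: "'a::idom"
  assumes "\<zeta> ^ (2 * m) = 1" "\<zeta> ^ m \<noteq> 1"
  shows "\<zeta> ^ m = -1"
proof -
  have "(\<zeta> ^ m) ^ 2 = 1"
    using assms(1) by (simp add: power_mult[symmetric] mult.commute)
  then show ?thesis
    using assms(2) by (simp add: power2_eq_1_iff)
qed

theorem proposition3p18:
  fixes T :: "'p::prime_card Fpbar \<Rightarrow> 'L::field"
    and v :: "'L \<Rightarrow> rat" and pw :: "rat \<Rightarrow> 'L"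
    and \<zeta> :: "'p Fpbar" and p n :: nat
  assumes p_def: "p = CARD('p)" and p3: "p \<ge> 3" and n2: "n \<ge> 2"
    and Lp: "Lp_structure p T v pw"
    and zeta_root: "\<zeta> ^ (2 * (p - 1)) = 1"
    and zeta_prim: "\<forall>j. 0 < j \<and> j < 2 * (p - 1) \<longrightarrow> \<zeta> ^ j \<noteq> 1"
  shows
    "(\<forall>i. 1 \<le> i \<and> i < p - 1 \<longrightarrow>
        bigO_eq v (Lambda p T pw \<zeta> i n ^ (p ^ (n - 1)) - 1)
          (\<Sum>l = 1..i. (-1) ^ l / T (of_nat (fact l)) * T \<zeta> ^ l * pw (of_nat l / (of_nat p - 1)))
          (1 + 1 / (of_nat p * (of_nat p - 1))))
   \<and> (\<forall>i. p - 1 \<le> i \<longrightarrow>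
        bigO_eq v (Lambda p T pw \<zeta> i n ^ (p ^ (n - 1)) - 1)
          ((\<Sum>l = 1..p - 1. (-1) ^ l / T (of_nat (fact l)) * T \<zeta> ^ l * pw (of_nat l / (of_nat p - 1)))
           + T \<zeta> * pw (1 + 1 / (of_nat p - 1) - 1 / of_nat p ^ (i + 2 - p)))
          (1 + 1 / (of_nat p - 1)))"
proof -
  have "Factorial_Ring.prime p" "CHAR('p Fpbar) = p"
    using p_def prime_card[where 'a='p] by simp_all
  moreover have "odd p"
    using prime_odd_nat[OF \<open>Factorial_Ring.prime p\<close>] p3 by simp
  moreover have "\<zeta> ^ (p - 1) = -1"
    using zeta_root zeta_prim p3 by (intro power_half_order_eq_minus_one) auto
  ultimately interpret Lambda_setting p T v pw \<zeta> n
    using Lp n2 by unfold_locales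
  show ?thesis
    using Lambda_power_expansion_short Lambda_power_expansion_long by blast
qed

end
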